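(* Let $\mathbb{X}$ be a real Banach space such that $(x,x)$ is a CPP for every $x\in S_{\mathbb{X}}$. Then $\mathbb{X}$ is strictly convex.
   Context: $\mathbb{X}$ has dimension greater than $1$. $B(x,r)=\{u:\|u-x\|<r\}$. $x\perp_B y$ means $\|x+\lambda y\|\ge\|x\|$ for all real $\lambda$; $x^\perp=\{y:x\perp_By\}$. For $x,y\in S_{\mathbb{X}}$, $(x,y)$ is a CPP if there exist $r>0,\mu>0$ such that for all $z\in x^\perp\cap S_{\mathbb{X}}$, all $w\in y^\perp\cap S_{\mathbb{X}}$ and all $a,b\in\mathbb{R}$, $ax+bz\in B(x,r)\cap S_{\mathbb{X}}$ implies $\|ay+b\mu w\|\le1$. *)

theory Defs
  imports "HOL-Analysis.Analysis"
begin

definition bj_orth :: "'a::real_normed_vector \<Rightarrow> 'a \<Rightarrow> bool" where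
  "bj_orth x y \<longleftrightarrow> (\<forall>l::real. norm (x + l *\<^sub>R y) \<ge> norm x)"

definition bj_orth_set :: "'a::real_normed_vector \<Rightarrow> 'a set" where
  "bj_orth_set x = {y. bj_orth x y}"

abbreviation unit_sphere :: "'a::real_normed_vector set" where
  "unit_sphere \<equiv> sphere 0 1"

definition CPP :: "'a::real_normed_vector \<Rightarrow> 'a \<Rightarrow> bool" where
  "CPP x y \<longleftrightarrow> x \<in> unit_sphere \<and> y \<in> unit_sphere \<and>
     (\<exists>r>0. \<exists>\<mu>>0. \<forall>z \<in> bj_orth_set x \<inter> unit_sphere. \<forall>w \<in> bj_orth_set y \<inter> unit_sphere.
        \<forall>a b::real. a *\<^sub>R x + b *\<^sub>R z \<in> ball x r \<inter> unit_sphere \<longrightarrow>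
           norm (a *\<^sub>R y + (b * \<mu>) *\<^sub>R w) \<le> 1)"

definition strictly_convex_space :: "'a::real_normed_vector itself \<Rightarrow> bool" where
  "strictly_convex_space _ \<longleftrightarrow>
     (\<forall>x y::'a. norm x = 1 \<longrightarrow> norm y = 1 \<longrightarrow> x \<noteq> y \<longrightarrow> norm ((1/2) *\<^sub>R (x + y)) < 1)"

end

theory Submission
  imports Defs
begin

text \<open>If the unit sphere contains a nondegenerate segment, extend it along its line to a maximal
  one and let x be an endpoint. The direction d of the segment is Birkhoff-James orthogonal to x,
  because the norm along the line never drops below 1. Moving from x back into the segment keeps
  us on the sphere arbitrarily close to x, while moving forward by any positive multiple of d
  leaves the unit ball; so the CPP condition for (x,x) fails with z = -d/norm d and w = d/norm d.\<close>

lemma convex_on_norm_line: "convex_on UNIV (\<lambda>t::real. norm (u + t *\<^sub>R d))"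
proof (rule convex_onI)
  fix th s t :: real
  assume "0 < th" "th < 1"
  have "u + ((1 - th) *\<^sub>R s + th *\<^sub>R t) *\<^sub>R d = (1 - th) *\<^sub>R (u + s *\<^sub>R d) + th *\<^sub>R (u + t *\<^sub>R d)"
    by (simp add: algebra_simps)
  also have "norm \<dots> \<le> (1 - th) * norm (u + s *\<^sub>R d) + th * norm (u + t *\<^sub>R d)"
    using norm_triangle_ineq \<open>0 < th\<close> \<open>th < 1\<close> by (smt (verit) norm_scaleR)
  finally show "norm (u + ((1 - th) *\<^sub>R s + th *\<^sub>R t) *\<^sub>R d)
      \<le> (1 - th) * norm (u + s *\<^sub>R d) + th * norm (u + t *\<^sub>R d)" .
qed simp

lemma convex_on_real_le_beyond:
  fixes f :: "real \<Rightarrow> real"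
  assumes "convex_on UNIV f" "0 < th" "th \<le> 1"
    and "f y \<le> f ((1 - th) * y + th * t)"
  shows "f ((1 - th) * y + th * t) \<le> f t"
proof -
  have "f ((1 - th) * y + th * t) \<le> (1 - th) * f y + th * f t"
    using convex_onD[OF assms(1), of th y t] assms(2,3) by simp
  also have "\<dots> \<le> (1 - th) * f ((1 - th) * y + th * t) + th * f t"
    using assms(3,4) by (simp add: mult_left_mono)
  finally show ?thesis
    using assms(2) by (simp add: algebra_simps)
qed

lemma convex_on_real_ge_of_midpoint:
  fixes f :: "real \<Rightarrow> real"
  assumes conv: "convex_on UNIV f" and "f 1 = f 0" and "f 0 \<le> f (1/2)"
  shows "f 0 \<le> f t"
proof (cases "t < 1/2")
  case True
  define th where "th = (1/2) / (1 - t)"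
  have "th * (1 - t) = 1/2"
    using True by (simp add: th_def)
  then have eq: "(1 - th) * 1 + th * t = 1/2"
    by (simp add: algebra_simps)
  have "0 < th" "th \<le> 1"
    using True by (auto simp: th_def field_simps)
  then show ?thesis
    using convex_on_real_le_beyond[OF conv, of th 1 t, unfolded eq] assms by simp
next
  case False
  define th where "th = (1/2) / t"
  have eq: "(1 - th) * 0 + th * t = 1/2"
    using False by (simp add: th_def)
  have "0 < th" "th \<le> 1"
    using False by (auto simp: th_def field_simps)
  then show ?thesis
    using convex_on_real_le_beyond[OF conv, of th 0 t, unfolded eq] assms by simp
qed

lemma convex_on_real_right_end_of_argmin:
  fixes g :: "real \<Rightarrow> real"
  assumes conv: "convex_on UNIV g" and min: "\<And>t. g 0 \<le> g t" and "g 1 = g 0"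
    and bdd: "bdd_above {t. g t \<le> g 0}"
  obtains T where "1 \<le> T" "\<And>t. t \<in> {0..T} \<Longrightarrow> g t = g 0" "\<And>t. T < t \<Longrightarrow> g 0 < g t"
proof
  define S where "S = {t. g t \<le> g 0}"
  have "continuous_on UNIV g"
    using convex_on_continuous[OF open_UNIV conv] .
  then have "closed S"
    unfolding S_def using closed_Collect_le continuous_on_const by blast
  moreover have "1 \<in> S" "bdd_above S"
    using \<open>g 1 = g 0\<close> bdd by (simp_all add: S_def)
  ultimately have "Sup S \<in> S" "1 \<le> Sup S"
    using closed_contains_Sup cSup_upper by blast+
  then show "1 \<le> Sup S" by simp
  show "g t = g 0" if "t \<in> {0..Sup S}" for t
  proof -
    have "convex_on {0..Sup S} g"
      using convex_on_subset[OF conv] by simp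
    then have "g t \<le> max (g 0) (g (Sup S))"
      using convex_on_le_max that by blast
    then show ?thesis
      using min[of t] \<open>Sup S \<in> S\<close> by (simp add: S_def)
  qed
  show "g 0 < g t" if "Sup S < t" for t
    using that cSup_upper[OF _ \<open>bdd_above S\<close>, of t] by (force simp: S_def)
qed

lemma bj_orth_scaleR_right:
  assumes "bj_orth x y"
  shows "bj_orth x (c *\<^sub>R y)"
  using assms by (simp add: bj_orth_def)

lemma not_CPP_at_face_endpoint:
  fixes x d :: "'a::real_normed_vector"
  assumes "x \<in> unit_sphere" and "d \<noteq> 0" and orth: "bj_orth x d" and "0 < e"
    and backward: "\<And>s. s \<in> {0..e} \<Longrightarrow> norm (x - s *\<^sub>R d) = 1"
    and forward: "\<And>s. 0 < s \<Longrightarrow> 1 < norm (x + s *\<^sub>R d)"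
  shows "\<not> CPP x x"
proof
  assume "CPP x x"
  then obtain r \<mu> where "0 < r" "0 < \<mu>" and cpp:
    "\<forall>z \<in> bj_orth_set x \<inter> unit_sphere. \<forall>w \<in> bj_orth_set x \<inter> unit_sphere.
        \<forall>a b::real. a *\<^sub>R x + b *\<^sub>R z \<in> ball x r \<inter> unit_sphere \<longrightarrow>
           norm (a *\<^sub>R x + (b * \<mu>) *\<^sub>R w) \<le> 1"
    unfolding CPP_def by blast
  define n where "n = norm d"
  have "0 < n"
    using \<open>d \<noteq> 0\<close> by (simp add: n_def)
  define z where "z = (- 1 / n) *\<^sub>R d"
  define w where "w = (1 / n) *\<^sub>R d"
  have "z \<in> bj_orth_set x" "w \<in> bj_orth_set x"
    unfolding z_def w_def bj_orth_set_def using bj_orth_scaleR_right[OF orth] by blast+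
  moreover have "z \<in> unit_sphere" "w \<in> unit_sphere"
    using \<open>0 < n\<close> by (simp_all add: z_def w_def n_def)
  ultimately have zw: "z \<in> bj_orth_set x \<inter> unit_sphere" "w \<in> bj_orth_set x \<inter> unit_sphere"
    by simp_all
  define b where "b = min (r/2) (e * n)"
  have "0 < b" "b / n \<le> e"
    using \<open>0 < r\<close> \<open>0 < e\<close> \<open>0 < n\<close> by (simp_all add: b_def field_simps)
  have "norm (x - (b / n) *\<^sub>R d) = 1"
    using backward \<open>0 < b\<close> \<open>0 < n\<close> \<open>b / n \<le> e\<close> by simp
  moreover have "dist x (x - (b / n) *\<^sub>R d) < r"
    using \<open>0 < b\<close> \<open>0 < n\<close> \<open>0 < r\<close> by (simp add: dist_norm n_def b_def)
  moreover have "1 *\<^sub>R x + b *\<^sub>R z = x - (b / n) *\<^sub>R d"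
    by (simp add: z_def)
  ultimately have "1 *\<^sub>R x + b *\<^sub>R z \<in> ball x r \<inter> unit_sphere"
    by simp
  then have "norm (1 *\<^sub>R x + (b * \<mu>) *\<^sub>R w) \<le> 1"
    using cpp zw by blast
  moreover have "1 *\<^sub>R x + (b * \<mu>) *\<^sub>R w = x + (b * \<mu> / n) *\<^sub>R d"
    by (simp add: w_def)
  ultimately show False
    using forward[of "b * \<mu> / n"] \<open>0 < b\<close> \<open>0 < \<mu>\<close> \<open>0 < n\<close> by simp
qed

lemma not_strictly_convex_face_endpoint:
  assumes "\<not> strictly_convex_space TYPE('a)"
  obtains x d :: "'a::real_normed_vector" and e :: real
  where "x \<in> unit_sphere" "d \<noteq> 0" "bj_orth x d" "0 < e"
    "\<And>s. s \<in> {0..e} \<Longrightarrow> norm (x - s *\<^sub>R d) = 1"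
    "\<And>s. 0 < s \<Longrightarrow> 1 < norm (x + s *\<^sub>R d)"
proof -
  obtain u v :: 'a where "norm u = 1" "norm v = 1" "u \<noteq> v"
    and mid: "1 \<le> norm ((1/2) *\<^sub>R (u + v))"
    using assms unfolding strictly_convex_space_def by force
  define d where "d = v - u"
  define g where "g t = norm (u + t *\<^sub>R d)" for t
  have conv: "convex_on UNIV g"
    unfolding g_def by (rule convex_on_norm_line)
  have "u + (1/2) *\<^sub>R d = (1/2) *\<^sub>R (u + v)"
    by (simp add: d_def algebra_simps flip: scaleR_add_left)
  then have g: "g 0 = 1" "g 1 = 1" "1 \<le> g (1/2)"
    using \<open>norm u = 1\<close> \<open>norm v = 1\<close> mid by (simp_all add: g_def d_def)
  then have ge: "1 \<le> g t" for t
    using convex_on_real_ge_of_midpoint[OF conv] by simp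
  have "t \<le> 2 / norm d" if "g t \<le> 1" for t
  proof -
    have "\<bar>t\<bar> * norm d \<le> norm (u + t *\<^sub>R d) + norm u"
      using norm_triangle_ineq4[of "u + t *\<^sub>R d" u] by simp
    then have "t * norm d \<le> 2"
      using that \<open>norm u = 1\<close> unfolding g_def
      by (smt (verit) abs_ge_self mult_right_mono norm_ge_zero)
    then show ?thesis
      using \<open>u \<noteq> v\<close> by (simp add: d_def field_simps)
  qed
  then have "bdd_above {t. g t \<le> g 0}"
    using g by (auto simp: bdd_above_def)
  then obtain T where "1 \<le> T" and face: "\<And>t. t \<in> {0..T} \<Longrightarrow> g t = 1"
    and beyond: "\<And>t. T < t \<Longrightarrow> 1 < g t"
    using convex_on_real_right_end_of_argmin[OF conv] ge g by (metis order.refl)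
  have line: "u + T *\<^sub>R d + c *\<^sub>R d = u + (T + c) *\<^sub>R d"
    "u + T *\<^sub>R d - c *\<^sub>R d = u + (T - c) *\<^sub>R d" for c
    by (simp_all add: algebra_simps)
  show thesis
  proof
    show "u + T *\<^sub>R d \<in> unit_sphere"
      using face[of T] \<open>1 \<le> T\<close> by (simp add: g_def)
    show "d \<noteq> 0" "0 < T"
      using \<open>u \<noteq> v\<close> \<open>1 \<le> T\<close> by (simp_all add: d_def)
    show "bj_orth (u + T *\<^sub>R d) d"
      unfolding bj_orth_def line
      using ge face[of T] \<open>1 \<le> T\<close> by (simp add: g_def)
    show "norm (u + T *\<^sub>R d - s *\<^sub>R d) = 1" if "s \<in> {0..T}" for s
      unfolding line(2) using face[of "T - s"] that by (simp add: g_def)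
    show "1 < norm (u + T *\<^sub>R d + s *\<^sub>R d)" if "0 < s" for s
      unfolding line(1) using beyond[of "T + s"] that by (simp add: g_def)
  qed
qed

theorem mainTheorem19:
  assumes dim_gt1: "\<not> (\<exists>v::'a::banach. \<forall>x::'a. \<exists>c::real. x = c *\<^sub>R v)"
    and cpp: "\<forall>x::'a. x \<in> sphere 0 1 \<longrightarrow> CPP x x"
  shows "strictly_convex_space TYPE('a)"
proof (rule ccontr)
  assume "\<not> strictly_convex_space TYPE('a)"
  then obtain x d :: 'a and e where "x \<in> unit_sphere" "d \<noteq> 0" "bj_orth x d" "0 < e"
    "\<And>s. s \<in> {0..e} \<Longrightarrow> norm (x - s *\<^sub>R d) = 1"
    "\<And>s. 0 < s \<Longrightarrow> 1 < norm (x + s *\<^sub>R d)"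
    by (rule not_strictly_convex_face_endpoint) blast
  then have "\<not> CPP x x"
    by (rule not_CPP_at_face_endpoint)
  then show False
    using cpp \<open>x \<in> unit_sphere\<close> by blast
qed

end
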